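(* Let $\sigma_1,\sigma_2\subset\mathbb R^n$ be two $n$-dimensional simplices with $\sigma_1\cap\sigma_2=\tau$ a common facet. Let $\mathcal D:=\sigma_1^0\cup(\sigma_2\setminus\partial\tau)$ and $\overline{\mathcal D}:=\sigma_1\cup\sigma_2$. Then there exists a semialgebraic homeomorphism $\psi:\sigma_2\to\overline{\mathcal D}$ such that $\psi(\sigma_2\setminus\tau)=\mathcal D$ and $\psi$ restricted to $\partial\sigma_2\setminus\tau^0$ is the identity.
   Context: For a simplex $\rho$, $\rho^0$ denotes its relative interior and $\partial\rho=\rho\setminus\rho^0$ its relative boundary. A facet of an $n$-simplex is a face of dimension $n-1$. *)

theory Defs
  imports "HOL-Analysis.Analysis"
begin

inductive poly_fun :: "('a::euclidean_space \<Rightarrow> real) \<Rightarrow> bool" where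
  const: "poly_fun (\<lambda>x. c)"
| coord: "b \<in> Basis \<Longrightarrow> poly_fun (\<lambda>x. x \<bullet> b)"
| add: "poly_fun p \<Longrightarrow> poly_fun q \<Longrightarrow> poly_fun (\<lambda>x. p x + q x)"
| mult: "poly_fun p \<Longrightarrow> poly_fun q \<Longrightarrow> poly_fun (\<lambda>x. p x * q x)"

inductive semialgebraic :: "('a::euclidean_space) set \<Rightarrow> bool" where
  zero: "poly_fun p \<Longrightarrow> semialgebraic {x. p x = 0}"
| pos: "poly_fun p \<Longrightarrow> semialgebraic {x. 0 < p x}"
| union: "semialgebraic S \<Longrightarrow> semialgebraic T \<Longrightarrow> semialgebraic (S \<union> T)"
| compl: "semialgebraic S \<Longrightarrow> semialgebraic (UNIV - S)"

definition semialgebraic_map :: "('a::euclidean_space) set \<Rightarrow> ('a \<Rightarrow> 'b::euclidean_space) \<Rightarrow> bool" where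
  "semialgebraic_map S f \<longleftrightarrow> semialgebraic S \<and> semialgebraic ((\<lambda>x. (x, f x)) ` S)"

end

theory Submission
  imports Defs
begin

text \<open>Let \<open>U\<close> be the vertices of the common facet, \<open>v1\<close> and \<open>v2\<close> the opposite vertices, and
  \<open>axis\<close> the direction from the centre of \<open>\<tau>\<close> to \<open>v1\<close>. Translation along \<open>axis\<close> keeps the
  coordinates \<open>base u\<close> (\<open>u \<in> U\<close>) fixed and lowers the \<open>height\<close> over the hyperplane of \<open>\<tau>\<close> at
  unit rate. On each such line, \<open>\<sigma>2\<close> is the segment \<open>0 \<le> height \<le> roof\<close> and \<open>\<sigma>1\<close> the segment
  \<open>-depth \<le> height \<le> 0\<close>, where \<open>depth\<close> and \<open>roof\<close> are minima of finitely many affine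
  functions of the base coordinates. The map \<open>psi\<close> stretches each segment of \<open>\<sigma>2\<close> affinely onto
  \<open>-depth \<le> height \<le> roof\<close>, keeping its top end fixed, and is the identity on lines with
  \<open>depth \<le> 0\<close>. So \<open>\<tau>\<close> is pushed onto the lower faces of \<open>\<sigma>1\<close> while the upper faces of \<open>\<sigma>2\<close> stay
  fixed; continuity where \<open>roof\<close> vanishes follows from \<open>\<bar>shift\<bar> \<le> max 0 depth\<close>, and the graph
  is semialgebraic because the two minima are attained at some index.\<close>

lemma affine_independent_weights_unique:
  fixes S :: "'a::euclidean_space set"
  assumes "\<not> affine_dependent S" "sum w S = 1" "sum w' S = 1"
    "(\<Sum>s\<in>S. w s *\<^sub>R s) = (\<Sum>s\<in>S. w' s *\<^sub>R s)" "s \<in> S"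
  shows "w s = w' s"
proof (rule ccontr)
  assume ne: "w s \<noteq> w' s"
  have fin: "finite S" using assms(1) aff_independent_finite by blast
  have "sum (\<lambda>s. w s - w' s) S = 0" using assms by (simp add: sum_subtractf)
  moreover have "(\<Sum>s\<in>S. (w s - w' s) *\<^sub>R s) = 0"
    using assms(4) by (simp add: scaleR_left_diff_distrib sum_subtractf)
  ultimately have "affine_dependent S"
    using affine_dependent_explicit_finite[OF fin] ne assms(5) by (metis right_minus_eq)
  then show False using assms(1) by simp
qed

lemma mem_convex_hull_affine_independent_iff:
  fixes S :: "'a::euclidean_space set"
  assumes "\<not> affine_dependent S" "sum w S = 1" "(\<Sum>s\<in>S. w s *\<^sub>R s) = x"
  shows "x \<in> convex hull S \<longleftrightarrow> (\<forall>s\<in>S. 0 \<le> w s)"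
proof
  assume "x \<in> convex hull S"
  then obtain w' where w': "\<forall>s\<in>S. 0 \<le> w' s" "sum w' S = 1" "(\<Sum>s\<in>S. w' s *\<^sub>R s) = x"
    using convex_hull_finite[OF aff_independent_finite[OF assms(1)]] by auto
  show "\<forall>s\<in>S. 0 \<le> w s"
    using affine_independent_weights_unique[OF assms(1,2) w'(2)] assms(3) w' by metis
next
  assume "\<forall>s\<in>S. 0 \<le> w s"
  then show "x \<in> convex hull S"
    using convex_hull_finite[OF aff_independent_finite[OF assms(1)]] assms(2,3) by auto
qed

lemma mem_rel_interior_convex_hull_affine_independent_iff:
  fixes S :: "'a::euclidean_space set"
  assumes "\<not> affine_dependent S" "sum w S = 1" "(\<Sum>s\<in>S. w s *\<^sub>R s) = x"
  shows "x \<in> rel_interior (convex hull S) \<longleftrightarrow> (\<forall>s\<in>S. 0 < w s)"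
proof
  assume "x \<in> rel_interior (convex hull S)"
  then obtain w' where w': "\<forall>s\<in>S. 0 < w' s" "sum w' S = 1" "(\<Sum>s\<in>S. w' s *\<^sub>R s) = x"
    using rel_interior_convex_hull_explicit[OF assms(1)] by auto
  show "\<forall>s\<in>S. 0 < w s"
    using affine_independent_weights_unique[OF assms(1,2) w'(2)] assms(3) w' by metis
next
  assume "\<forall>s\<in>S. 0 < w s"
  then show "x \<in> rel_interior (convex hull S)"
    using rel_interior_convex_hull_explicit[OF assms(1)] assms(2,3) by auto
qed

lemma rel_frontier_convex_hull_finite:
  fixes S :: "'a::euclidean_space set"
  assumes "finite S"
  shows "rel_frontier (convex hull S) = convex hull S - rel_interior (convex hull S)"
  using assms unfolding rel_frontier_def
  by (simp add: closure_closed compact_imp_closed finite_imp_compact_convex_hull)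

lemma sum_scaleR_eq_translate:
  assumes "sum w S = 1"
  shows "(\<Sum>s\<in>S. w s *\<^sub>R s) = (a::'a::real_vector) + (\<Sum>s\<in>S. w s *\<^sub>R (s - a))"
proof -
  have "(\<Sum>s\<in>S. w s *\<^sub>R (s - a)) = (\<Sum>s\<in>S. w s *\<^sub>R s) - sum w S *\<^sub>R a"
    unfolding scaleR_right_diff_distrib sum_subtractf scaleR_sum_left ..
  then show ?thesis using assms by simp
qed

lemma exists_dual_vectors:
  fixes e :: "'i \<Rightarrow> 'a::euclidean_space"
  assumes "finite I" "inj_on e I" "independent (e ` I)" "card I = DIM('a)"
  shows "\<exists>c. \<forall>z. z = (\<Sum>i\<in>I. (z \<bullet> c i) *\<^sub>R e i)"
proof -
  define V where "V = e ` I"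
  have finV: "finite V" using assms(1) V_def by auto
  have "card V = dim (UNIV::'a set)" unfolding V_def using card_image[OF assms(2)] assms(4) by simp
  then have spV: "span V = UNIV" using card_eq_dim[of V UNIV] assms(3) finV V_def by auto
  define c where "c i = (\<Sum>b\<in>Basis. representation V b (e i) *\<^sub>R b)" for i
  have rep_inner: "representation V z v = z \<bullet> (\<Sum>b\<in>Basis. representation V b v *\<^sub>R b)" for z v
  proof -
    have "representation V z v = representation V (\<Sum>b\<in>Basis. (z \<bullet> b) *\<^sub>R b) v"
      by (simp add: euclidean_representation)
    also have "\<dots> = (\<Sum>b\<in>Basis. (z \<bullet> b) * representation V b v)"
      using assms(3) spV V_def
      by (simp add: real_vector.representation_sum real_vector.representation_scale)
    also have "\<dots> = z \<bullet> (\<Sum>b\<in>Basis. representation V b v *\<^sub>R b)"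
      by (simp add: inner_sum_right mult.commute)
    finally show ?thesis .
  qed
  have "z = (\<Sum>i\<in>I. (z \<bullet> c i) *\<^sub>R e i)" for z
  proof -
    have "z = (\<Sum>v\<in>V. representation V z v *\<^sub>R v)"
      using real_vector.sum_representation_eq[OF _ _ finV] assms(3) spV V_def by auto
    also have "\<dots> = (\<Sum>i\<in>I. representation V z (e i) *\<^sub>R e i)"
      unfolding V_def by (simp add: sum.reindex[OF assms(2)])
    also have "\<dots> = (\<Sum>i\<in>I. (z \<bullet> c i) *\<^sub>R e i)"
      using rep_inner[of z] unfolding c_def by simp
    finally show ?thesis .
  qed
  then show ?thesis by blast
qed

lemma continuous_on_Min:
  fixes f :: "'i \<Rightarrow> 'x::topological_space \<Rightarrow> real"
  assumes "finite I" "I \<noteq> {}" "\<forall>i\<in>I. continuous_on S (f i)"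
  shows "continuous_on S (\<lambda>x. Min ((\<lambda>i. f i x) ` I))"
  using assms
proof (induction I rule: finite_ne_induct)
  case (singleton i)
  then show ?case by simp
next
  case (insert i F)
  have "continuous_on S (\<lambda>x. min (f i x) (Min ((\<lambda>i. f i x) ` F)))"
    using insert by (intro continuous_on_min) auto
  moreover have "Min ((\<lambda>i. f i x) ` insert i F) = min (f i x) (Min ((\<lambda>i. f i x) ` F))" for x
    using insert by (simp add: Min_insert)
  ultimately show ?case by simp
qed

text \<open>\<open>s \<mapsto> s - fiber_shift a l s\<close> is the affine bijection of \<open>[0, l]\<close> onto \<open>[-a, l]\<close>
  fixing \<open>l\<close>.\<close>
definition fiber_shift :: "real \<Rightarrow> real \<Rightarrow> real \<Rightarrow> real" where
  "fiber_shift a l s = a * (l - s) / l"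

lemma fiber_shift_bounds:
  assumes "0 \<le> a" "0 < l" "0 \<le> s" "s \<le> l"
  shows "0 \<le> fiber_shift a l s" "fiber_shift a l s \<le> a"
proof -
  show "0 \<le> fiber_shift a l s" using assms unfolding fiber_shift_def by simp
  have "a * (l - s) \<le> a * l" using assms by (simp add: mult_left_mono)
  then show "fiber_shift a l s \<le> a" using assms unfolding fiber_shift_def by (simp add: divide_le_eq)
qed

lemma fiber_shift_eq: "0 < l \<Longrightarrow> s - fiber_shift a l s = s * (l + a) / l - a"
  unfolding fiber_shift_def by (simp add: field_simps)

lemma fiber_shift_inj:
  assumes "0 \<le> a" "0 < l" "s - fiber_shift a l s = s' - fiber_shift a l s'"
  shows "s = s'"
  using assms by (simp add: fiber_shift_eq add_pos_nonneg)

lemma fiber_shift_bottom: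
  assumes "0 \<le> a" "0 < l" "0 \<le> s"
  shows "s - fiber_shift a l s = - a \<longleftrightarrow> s = 0"
    and "- a \<le> s - fiber_shift a l s"
  using assms by (simp_all add: fiber_shift_eq add_pos_nonneg)

lemma fiber_shift_surj:
  assumes "0 \<le> a" "0 < l" "- a \<le> z" "z \<le> l"
  obtains s where "0 \<le> s" "s \<le> l" "s - fiber_shift a l s = z"
proof
  define s where "s = l * (z + a) / (l + a)"
  have la: "0 < l + a" using assms by simp
  show "0 \<le> s" unfolding s_def using assms la by simp
  have "l * (z + a) \<le> l * (l + a)" using assms by (simp add: mult_left_mono)
  then show "s \<le> l" unfolding s_def using la by (simp add: divide_le_eq)
  have "s * (l + a) = l * (z + a)" unfolding s_def using la by simp
  then show "s - fiber_shift a l s = z"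
    unfolding fiber_shift_eq[OF assms(2)] using assms by simp
qed

section \<open>Polynomial functions and semialgebraic sets\<close>

lemma poly_fun_diff: "poly_fun p \<Longrightarrow> poly_fun q \<Longrightarrow> poly_fun (\<lambda>x. p x - q x)"
proof -
  assume "poly_fun p" "poly_fun q"
  then have "poly_fun (\<lambda>x. p x + (-1) * q x)" by (intro poly_fun.intros)
  then show ?thesis by simp
qed

lemma poly_fun_divide_const: "poly_fun p \<Longrightarrow> poly_fun (\<lambda>x. p x / c)"
proof -
  assume "poly_fun p"
  then have "poly_fun (\<lambda>x. p x * (1 / c))" by (intro poly_fun.intros)
  then show ?thesis by simp
qed

lemma poly_fun_sum: "finite I \<Longrightarrow> \<forall>i\<in>I. poly_fun (g i) \<Longrightarrow> poly_fun (\<lambda>x. \<Sum>i\<in>I. g i x)"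
proof (induction I rule: finite_induct)
  case empty
  then show ?case using poly_fun.const[of 0] by simp
next
  case (insert i F)
  then show ?case by (simp add: poly_fun.add)
qed

lemma poly_fun_linear:
  fixes f :: "'a::euclidean_space \<Rightarrow> real"
  assumes "linear f"
  shows "poly_fun f"
proof -
  have "f x = (\<Sum>b\<in>Basis. (x \<bullet> b) * f b)" for x
  proof -
    have "f x = f (\<Sum>b\<in>Basis. (x \<bullet> b) *\<^sub>R b)" by (simp add: euclidean_representation)
    also have "\<dots> = (\<Sum>b\<in>Basis. (x \<bullet> b) * f b)"
      using assms by (simp add: linear_sum linear_scale)
    finally show ?thesis .
  qed
  moreover have "poly_fun (\<lambda>x. \<Sum>b\<in>Basis. (x \<bullet> b) * f b)"
    by (intro poly_fun_sum) (auto intro: poly_fun.intros)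
  ultimately show ?thesis by (metis (no_types, lifting) ext)
qed

lemma poly_fun_inner_linear:
  fixes g :: "'a::euclidean_space \<Rightarrow> 'b::euclidean_space"
  assumes "linear g"
  shows "poly_fun (\<lambda>x. g x \<bullet> c)"
  by (rule poly_fun_linear)
    (intro linear_compose[OF assms, unfolded o_def] bounded_linear.linear bounded_linear_inner_left)

lemma semialgebraic_neg: "semialgebraic {x. P x} \<Longrightarrow> semialgebraic {x. \<not> P x}"
  using semialgebraic.compl[of "{x. P x}"] by (simp add: set_diff_eq)

lemma semialgebraic_disj:
  "semialgebraic {x. P x} \<Longrightarrow> semialgebraic {x. Q x} \<Longrightarrow> semialgebraic {x. P x \<or> Q x}"
  using semialgebraic.union[of "{x. P x}" "{x. Q x}"] by (simp add: Collect_disj_eq)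

lemma semialgebraic_conj:
  "semialgebraic {x. P x} \<Longrightarrow> semialgebraic {x. Q x} \<Longrightarrow> semialgebraic {x. P x \<and> Q x}"
proof -
  assume "semialgebraic {x. P x}" "semialgebraic {x. Q x}"
  then have "semialgebraic {x. \<not> (\<not> P x \<or> \<not> Q x)}" by (intro semialgebraic_neg semialgebraic_disj)
  then show ?thesis by simp
qed

lemma semialgebraic_eq: "poly_fun p \<Longrightarrow> poly_fun q \<Longrightarrow> semialgebraic {x. p x = q x}"
  using semialgebraic.zero[of "\<lambda>x. p x - q x"] by (simp add: poly_fun_diff)

lemma semialgebraic_less: "poly_fun p \<Longrightarrow> poly_fun q \<Longrightarrow> semialgebraic {x. p x < q x}"
  using semialgebraic.pos[of "\<lambda>x. q x - p x"] by (simp add: poly_fun_diff)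

lemma semialgebraic_le: "poly_fun p \<Longrightarrow> poly_fun q \<Longrightarrow> semialgebraic {x. p x \<le> q x}"
  using semialgebraic_disj[OF semialgebraic_less semialgebraic_eq] by (simp add: le_less)

lemma semialgebraic_True: "semialgebraic {x::'a::euclidean_space. True}"
  using semialgebraic_eq[OF poly_fun.const poly_fun.const, of 0 0] by simp

lemma semialgebraic_ball:
  "finite I \<Longrightarrow> \<forall>i\<in>I. semialgebraic {x. P i x} \<Longrightarrow> semialgebraic {x. \<forall>i\<in>I. P i x}"
proof (induction I rule: finite_induct)
  case empty
  then show ?case using semialgebraic_True by simp
next
  case (insert i F)
  then show ?case using semialgebraic_conj[of "P i" "\<lambda>x. \<forall>i\<in>F. P i x"] by simp
qed

lemma semialgebraic_bex:
  "finite I \<Longrightarrow> \<forall>i\<in>I. semialgebraic {x. P i x} \<Longrightarrow> semialgebraic {x. \<exists>i\<in>I. P i x}"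
proof (induction I rule: finite_induct)
  case empty
  then show ?case using semialgebraic_neg[OF semialgebraic_True] by simp
next
  case (insert i F)
  then show ?case using semialgebraic_disj[of "P i" "\<lambda>x. \<exists>i\<in>F. P i x"] by simp
qed

section \<open>Coordinates for two simplices on a common facet\<close>

locale simplex_pair =
  fixes U :: "'a::euclidean_space set" and v1 v2 :: 'a
  assumes finite_U: "finite U" and card_U: "card U = DIM('a)"
    and v1_notin_U: "v1 \<notin> U" and v2_notin_U: "v2 \<notin> U"
    and indep_v1: "\<not> affine_dependent (insert v1 U)"
    and indep_v2: "\<not> affine_dependent (insert v2 U)"
begin

abbreviation "\<sigma>1 \<equiv> convex hull (insert v1 U)"
abbreviation "\<sigma>2 \<equiv> convex hull (insert v2 U)"
abbreviation "\<tau> \<equiv> convex hull U"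
abbreviation "n \<equiv> real (card U)"

lemma U_nonempty: "U \<noteq> {}"
  using card_U by auto

lemma n_pos: "0 < n"
  using card_U by simp

lemma indep_U: "\<not> affine_dependent U"
  using affine_independent_subset[OF indep_v1] by blast

lemma exists_coordinates: "\<exists>c. \<forall>z. z = (\<Sum>u\<in>U. (z \<bullet> c u) *\<^sub>R (u - v1))"
proof (rule exists_dual_vectors[OF finite_U _ _ card_U])
  show "inj_on (\<lambda>u. u - v1) U" by (auto simp: inj_on_def)
  have "(\<lambda>u. u - v1) ` U = (+) (- v1) ` U" by auto
  then show "independent ((\<lambda>u. u - v1) ` U)"
    using indep_v1 v1_notin_U affine_dependent_iff_dependent by metis
qed

text \<open>\<open>coord u\<close> is the affine coordinate along \<open>u - v1\<close> in the frame with origin \<open>v1\<close>,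
  and \<open>apex1\<close> the remaining barycentric weight, that of \<open>v1\<close>.\<close>
definition coord_vec :: "'a \<Rightarrow> 'a" where
  "coord_vec = (SOME c. \<forall>z. z = (\<Sum>u\<in>U. (z \<bullet> c u) *\<^sub>R (u - v1)))"

definition coord :: "'a \<Rightarrow> 'a \<Rightarrow> real" where
  "coord u x = (x - v1) \<bullet> coord_vec u"

definition apex1 :: "'a \<Rightarrow> real" where
  "apex1 x = 1 - (\<Sum>u\<in>U. coord u x)"

lemma coord_expansion: "x = v1 + (\<Sum>u\<in>U. coord u x *\<^sub>R (u - v1))"
proof -
  have "\<forall>z. z = (\<Sum>u\<in>U. (z \<bullet> coord_vec u) *\<^sub>R (u - v1))"
    unfolding coord_vec_def using someI_ex[OF exists_coordinates] by blast
  then have "x - v1 = (\<Sum>u\<in>U. coord u x *\<^sub>R (u - v1))" unfolding coord_def by blast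
  then show ?thesis by (metis add.commute diff_add_cancel)
qed

lemma barycentric_expansion:
  "(\<Sum>s\<in>insert v1 U. (if s = v1 then apex1 x else coord s x) *\<^sub>R s) = x"
  and barycentric_sum: "(\<Sum>s\<in>insert v1 U. if s = v1 then apex1 x else coord s x) = 1"
proof -
  let ?w = "\<lambda>s. if s = v1 then apex1 x else coord s x"
  have swU: "sum ?w U = (\<Sum>u\<in>U. coord u x)" using v1_notin_U by (auto intro!: sum.cong)
  show sw: "sum ?w (insert v1 U) = 1" using v1_notin_U finite_U swU by (simp add: apex1_def)
  have "(\<Sum>s\<in>insert v1 U. ?w s *\<^sub>R s) = v1 + (\<Sum>s\<in>insert v1 U. ?w s *\<^sub>R (s - v1))"
    by (rule sum_scaleR_eq_translate[OF sw])
  also have "\<dots> = v1 + (\<Sum>u\<in>U. coord u x *\<^sub>R (u - v1))"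
    using v1_notin_U finite_U by (auto intro!: sum.cong)
  finally show "(\<Sum>s\<in>insert v1 U. ?w s *\<^sub>R s) = x" using coord_expansion[of x] by simp
qed

lemma coord_unique:
  assumes "x = v1 + (\<Sum>u\<in>U. f u *\<^sub>R (u - v1))" "u \<in> U"
  shows "f u = coord u x"
proof -
  define w where "w s = (if s = v1 then 1 - sum f U else f s)" for s
  have sw: "sum w (insert v1 U) = 1"
    using v1_notin_U finite_U unfolding w_def by (auto intro!: sum.cong)
  have "(\<Sum>s\<in>insert v1 U. w s *\<^sub>R s) = v1 + (\<Sum>s\<in>insert v1 U. w s *\<^sub>R (s - v1))"
    by (rule sum_scaleR_eq_translate[OF sw])
  also have "\<dots> = x"
    using assms(1) v1_notin_U finite_U unfolding w_def by (auto intro!: sum.cong)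
  also have "\<dots> = (\<Sum>s\<in>insert v1 U. (if s = v1 then apex1 x else coord s x) *\<^sub>R s)"
    by (rule barycentric_expansion[symmetric])
  finally have "w u = (if u = v1 then apex1 x else coord u x)"
    using affine_independent_weights_unique[OF indep_v1 sw barycentric_sum] assms(2) by blast
  moreover have "u \<noteq> v1" using assms(2) v1_notin_U by blast
  ultimately show ?thesis unfolding w_def by simp
qed

lemma coord_add: "coord u (x + z) = coord u x + z \<bullet> coord_vec u"
  unfolding coord_def by (simp add: inner_simps)

lemma coord_convex_combination:
  "coord u ((1 - e) *\<^sub>R a + e *\<^sub>R b) = (1 - e) * coord u a + e * coord u b"
proof -
  have "(1 - e) *\<^sub>R a + e *\<^sub>R b - v1 = (1 - e) *\<^sub>R (a - v1) + e *\<^sub>R (b - v1)"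
    by (simp add: algebra_simps)
  then show ?thesis unfolding coord_def by (simp add: inner_simps)
qed

lemma mem_sigma1_iff_coord:
  "x \<in> \<sigma>1 \<longleftrightarrow> (\<forall>u\<in>U. 0 \<le> coord u x) \<and> 0 \<le> apex1 x"
  using mem_convex_hull_affine_independent_iff[OF indep_v1 barycentric_sum barycentric_expansion]
    v1_notin_U by auto

lemma mem_rel_interior_sigma1_iff_coord:
  "x \<in> rel_interior \<sigma>1 \<longleftrightarrow> (\<forall>u\<in>U. 0 < coord u x) \<and> 0 < apex1 x"
  using mem_rel_interior_convex_hull_affine_independent_iff[OF indep_v1 barycentric_sum
      barycentric_expansion] v1_notin_U by auto

lemma mem_tau_iff_coord: "x \<in> \<tau> \<longleftrightarrow> apex1 x = 0 \<and> (\<forall>u\<in>U. 0 \<le> coord u x)"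
  and mem_rel_interior_tau_iff_coord:
    "x \<in> rel_interior \<tau> \<longleftrightarrow> apex1 x = 0 \<and> (\<forall>u\<in>U. 0 < coord u x)"
proof -
  have apex: "apex1 x = 0" if x: "x \<in> \<tau>"
  proof -
    obtain w where w: "\<forall>s\<in>U. 0 \<le> w s" "sum w U = 1" "(\<Sum>s\<in>U. w s *\<^sub>R s) = x"
      using x convex_hull_finite[OF finite_U] by auto
    have "x = v1 + (\<Sum>s\<in>U. w s *\<^sub>R (s - v1))"
      using sum_scaleR_eq_translate[OF w(2), of v1] w(3) by simp
    then have "\<forall>u\<in>U. w u = coord u x" using coord_unique by blast
    then show ?thesis using w(2) unfolding apex1_def by simp
  qed
  have "x \<in> \<tau> \<longleftrightarrow> (\<forall>u\<in>U. 0 \<le> coord u x)" "x \<in> rel_interior \<tau> \<longleftrightarrow> (\<forall>u\<in>U. 0 < coord u x)"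
    if "apex1 x = 0"
  proof -
    have sw: "sum (\<lambda>u. coord u x) U = 1" using that unfolding apex1_def by simp
    have "(\<Sum>u\<in>U. coord u x *\<^sub>R u) = x"
      using sum_scaleR_eq_translate[OF sw, of v1] coord_expansion[of x] by simp
    then show "x \<in> \<tau> \<longleftrightarrow> (\<forall>u\<in>U. 0 \<le> coord u x)"
      "x \<in> rel_interior \<tau> \<longleftrightarrow> (\<forall>u\<in>U. 0 < coord u x)"
      using mem_convex_hull_affine_independent_iff[OF indep_U sw]
        mem_rel_interior_convex_hull_affine_independent_iff[OF indep_U sw] by blast+
  qed
  with apex rel_interior_subset show "x \<in> \<tau> \<longleftrightarrow> apex1 x = 0 \<and> (\<forall>u\<in>U. 0 \<le> coord u x)"
    "x \<in> rel_interior \<tau> \<longleftrightarrow> apex1 x = 0 \<and> (\<forall>u\<in>U. 0 < coord u x)"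
    by blast+
qed

lemma sum_coord: "(\<Sum>u\<in>U. coord u x) = 1 - apex1 x"
  unfolding apex1_def by simp

lemma apex1_v2_nonzero: "apex1 v2 \<noteq> 0"
proof
  assume "apex1 v2 = 0"
  then have s1: "(\<Sum>u\<in>U. coord u v2) = 1" unfolding apex1_def by simp
  have "v2 = (\<Sum>u\<in>U. coord u v2 *\<^sub>R u)"
    using coord_expansion[of v2] sum_scaleR_eq_translate[OF s1, of v1] by simp
  then have "v2 \<in> affine hull (insert v2 U - {v2})"
    using affine_hull_finite[OF finite_U] s1 v2_notin_U by auto
  then show False using indep_v2 unfolding affine_dependent_def by blast
qed

definition bary2 :: "'a \<Rightarrow> 'a \<Rightarrow> real" where
  "bary2 u x = coord u x - apex1 x / apex1 v2 * coord u v2"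

lemma barycentric2_expansion:
  "(\<Sum>s\<in>insert v2 U. (if s = v2 then apex1 x / apex1 v2 else bary2 s x) *\<^sub>R s) = x"
  and barycentric2_sum:
    "(\<Sum>s\<in>insert v2 U. if s = v2 then apex1 x / apex1 v2 else bary2 s x) = 1"
proof -
  let ?w = "\<lambda>s. if s = v2 then apex1 x / apex1 v2 else bary2 s x"
  have swU: "sum ?w U = (\<Sum>u\<in>U. bary2 u x)" using v2_notin_U by (auto intro!: sum.cong)
  have "(\<Sum>u\<in>U. bary2 u x) = (\<Sum>u\<in>U. coord u x) - apex1 x / apex1 v2 * (\<Sum>u\<in>U. coord u v2)"
    unfolding bary2_def by (simp add: sum_subtractf sum_distrib_left)
  also have "\<dots> = 1 - apex1 x - apex1 x / apex1 v2 * (1 - apex1 v2)"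
    by (simp only: sum_coord)
  finally have "(\<Sum>u\<in>U. bary2 u x) = 1 - apex1 x - apex1 x / apex1 v2 * (1 - apex1 v2)" .
  then show sw: "sum ?w (insert v2 U) = 1"
    using v2_notin_U finite_U swU apex1_v2_nonzero by (simp add: field_simps)
  have v2_expansion: "v2 - v1 = (\<Sum>u\<in>U. coord u v2 *\<^sub>R (u - v1))"
    using coord_expansion[of v2] by (metis add_diff_cancel_left')
  have "(\<Sum>s\<in>insert v2 U. ?w s *\<^sub>R s) = v1 + (\<Sum>s\<in>insert v2 U. ?w s *\<^sub>R (s - v1))"
    by (rule sum_scaleR_eq_translate[OF sw])
  also have "\<dots> = v1 + ((apex1 x / apex1 v2) *\<^sub>R (v2 - v1) + (\<Sum>u\<in>U. ?w u *\<^sub>R (u - v1)))"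
    using v2_notin_U finite_U by simp
  also have "(\<Sum>u\<in>U. ?w u *\<^sub>R (u - v1)) = (\<Sum>u\<in>U. bary2 u x *\<^sub>R (u - v1))"
    using v2_notin_U by (auto intro!: sum.cong)
  also have "(apex1 x / apex1 v2) *\<^sub>R (v2 - v1)
      = (\<Sum>u\<in>U. (apex1 x / apex1 v2 * coord u v2) *\<^sub>R (u - v1))"
    unfolding v2_expansion by (simp add: scaleR_sum_right)
  also have "(\<Sum>u\<in>U. (apex1 x / apex1 v2 * coord u v2) *\<^sub>R (u - v1))
      + (\<Sum>u\<in>U. bary2 u x *\<^sub>R (u - v1)) = (\<Sum>u\<in>U. coord u x *\<^sub>R (u - v1))"
    unfolding sum.distrib[symmetric] scaleR_add_left[symmetric] by (simp add: bary2_def)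
  finally show "(\<Sum>s\<in>insert v2 U. ?w s *\<^sub>R s) = x" using coord_expansion[of x] by simp
qed

lemma mem_sigma2_iff_bary2:
  "x \<in> \<sigma>2 \<longleftrightarrow> (\<forall>u\<in>U. 0 \<le> bary2 u x) \<and> 0 \<le> apex1 x / apex1 v2"
  using mem_convex_hull_affine_independent_iff[OF indep_v2 barycentric2_sum barycentric2_expansion]
    v2_notin_U by auto

lemma mem_rel_interior_sigma2_iff_bary2:
  "x \<in> rel_interior \<sigma>2 \<longleftrightarrow> (\<forall>u\<in>U. 0 < bary2 u x) \<and> 0 < apex1 x / apex1 v2"
  using mem_rel_interior_convex_hull_affine_independent_iff[OF indep_v2 barycentric2_sum
      barycentric2_expansion] v2_notin_U by auto

definition centre :: 'a where
  "centre = (1 / n) *\<^sub>R (\<Sum>u\<in>U. u)"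

lemma coord_centre: "u \<in> U \<Longrightarrow> coord u centre = 1 / n"
proof -
  assume u: "u \<in> U"
  have "(\<Sum>u\<in>U. (1 / n) *\<^sub>R (u - v1)) = centre - v1"
    unfolding centre_def using n_pos
    by (simp add: scaleR_diff_right sum_subtractf scaleR_sum_right sum_constant_scaleR)
  then show ?thesis using coord_unique[of centre "\<lambda>_. 1 / n", OF _ u] by simp
qed

lemma centre_mem_tau: "centre \<in> \<tau>"
  using coord_centre n_pos by (simp add: mem_tau_iff_coord apex1_def)

end

locale adjacent_simplices = simplex_pair +
  assumes inter_eq_tau: "\<sigma>1 \<inter> \<sigma>2 = \<tau>"
begin

text \<open>If \<open>apex1 v2 > 0\<close>, the points of the segment from the centre of \<open>\<tau>\<close> towards \<open>v2\<close> that
  are close enough to the centre would lie in both simplices but not in \<open>\<tau>\<close>.\<close>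
lemma apex1_v2_neg: "apex1 v2 < 0"
proof (rule ccontr)
  assume "\<not> apex1 v2 < 0"
  then have pos: "0 < apex1 v2" using apex1_v2_nonzero by simp
  define M where "M = (\<Sum>u\<in>U. \<bar>coord u v2\<bar>)"
  have M0: "0 \<le> M" unfolding M_def by (simp add: sum_nonneg)
  define e where "e = 1 / (1 + n * M)"
  have den: "0 < 1 + n * M" using n_pos M0 by (simp add: add_pos_nonneg)
  have e0: "0 < e" "e \<le> 1" unfolding e_def using den n_pos M0 by (auto simp: field_simps)
  have "e * (1 + n * M) = 1" unfolding e_def using den by simp
  then have "1 - e = e * n * M" by (simp add: algebra_simps)
  then have e_eq: "(1 - e) / n = e * M" using n_pos by simp
  define x where "x = (1 - e) *\<^sub>R centre + e *\<^sub>R v2"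
  have coord_x: "coord u x = (1 - e) / n + e * coord u v2" if "u \<in> U" for u
    unfolding x_def coord_convex_combination coord_centre[OF that] by simp
  have "(\<Sum>u\<in>U. coord u x) = (1 - e) + e * (1 - apex1 v2)"
    using n_pos by (simp add: coord_x sum.distrib sum_distrib_left[symmetric] sum_coord)
  then have apex_x: "apex1 x = e * apex1 v2" unfolding apex1_def by (simp add: algebra_simps)
  have "0 \<le> coord u x" if u: "u \<in> U" for u
  proof -
    have "\<bar>coord u v2\<bar> \<le> M"
      unfolding M_def using member_le_sum[OF u, of "\<lambda>u. \<bar>coord u v2\<bar>"] finite_U by simp
    then have "e * (- M) \<le> e * coord u v2" using e0 by (intro mult_left_mono) auto
    then show ?thesis using coord_x[OF u] e_eq by simp
  qed
  then have "x \<in> \<sigma>1" using apex_x e0 pos by (simp add: mem_sigma1_iff_coord)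
  moreover have "x \<in> \<sigma>2"
    unfolding x_def using e0 hull_mono[of U "insert v2 U"] centre_mem_tau hull_inc[of v2]
    by (intro convexD_alt[OF convex_convex_hull]) auto
  ultimately have "apex1 x = 0" using inter_eq_tau mem_tau_iff_coord by blast
  then show False using apex_x e0 pos by simp
qed

section \<open>The gluing map\<close>

definition axis :: 'a where
  "axis = v1 - centre"

definition base :: "'a \<Rightarrow> 'a \<Rightarrow> real" where
  "base u x = coord u x + apex1 x / n"

definition height :: "'a \<Rightarrow> real" where
  "height x = - apex1 x"

definition slope :: "'a \<Rightarrow> real" where
  "slope u = - coord u v2 / apex1 v2 - 1 / n"

definition rising :: "'a set" where
  "rising = {u \<in> U. 0 < slope u}"

definition depth :: "'a \<Rightarrow> real" where
  "depth x = n * Min ((\<lambda>u. base u x) ` U)"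

definition roof :: "'a \<Rightarrow> real" where
  "roof x = Min ((\<lambda>u. base u x / slope u) ` rising)"

definition shift :: "'a \<Rightarrow> real" where
  "shift x = fiber_shift (max 0 (depth x)) (roof x) (height x)"

definition psi :: "'a \<Rightarrow> 'a" where
  "psi x = x + shift x *\<^sub>R axis"

lemma mem_sigma1_iff: "x \<in> \<sigma>1 \<longleftrightarrow> (\<forall>u\<in>U. 0 \<le> base u x + height x / n) \<and> height x \<le> 0"
  using mem_sigma1_iff_coord[of x] by (simp add: base_def height_def)

lemma mem_rel_interior_sigma1_iff:
  "x \<in> rel_interior \<sigma>1 \<longleftrightarrow> (\<forall>u\<in>U. 0 < base u x + height x / n) \<and> height x < 0"
  using mem_rel_interior_sigma1_iff_coord[of x] by (simp add: base_def height_def)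

lemma bary2_eq: "bary2 u x = base u x - height x * slope u"
  unfolding bary2_def base_def height_def slope_def
  using apex1_v2_nonzero n_pos by (simp add: field_simps)

lemma mem_sigma2_iff: "x \<in> \<sigma>2 \<longleftrightarrow> (\<forall>u\<in>U. 0 \<le> base u x - height x * slope u) \<and> 0 \<le> height x"
proof -
  have "0 \<le> apex1 x / apex1 v2 \<longleftrightarrow> apex1 x \<le> 0"
    using apex1_v2_neg by (auto simp: zero_le_divide_iff)
  then show ?thesis using mem_sigma2_iff_bary2[of x] by (simp add: bary2_eq height_def)
qed

lemma mem_rel_interior_sigma2_iff:
  "x \<in> rel_interior \<sigma>2 \<longleftrightarrow> (\<forall>u\<in>U. 0 < base u x - height x * slope u) \<and> 0 < height x"
proof -
  have "0 < apex1 x / apex1 v2 \<longleftrightarrow> apex1 x < 0"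
    using apex1_v2_neg by (auto simp: zero_less_divide_iff)
  then show ?thesis using mem_rel_interior_sigma2_iff_bary2[of x] by (simp add: bary2_eq height_def)
qed

lemma mem_tau_iff: "x \<in> \<tau> \<longleftrightarrow> height x = 0 \<and> (\<forall>u\<in>U. 0 \<le> base u x)"
  using mem_tau_iff_coord[of x] by (auto simp: base_def height_def)

lemma mem_rel_interior_tau_iff: "x \<in> rel_interior \<tau> \<longleftrightarrow> height x = 0 \<and> (\<forall>u\<in>U. 0 < base u x)"
  using mem_rel_interior_tau_iff_coord[of x] by (auto simp: base_def height_def)

lemma eq_if_base_height_eq:
  assumes "\<forall>u\<in>U. base u x = base u x'" "height x = height x'"
  shows "x = x'"
proof -
  have "\<forall>u\<in>U. coord u x = coord u x'"
    using assms n_pos unfolding base_def height_def by (simp add: field_simps)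
  then show ?thesis using coord_expansion[of x] coord_expansion[of x'] by simp
qed

lemma coord_translate: "u \<in> U \<Longrightarrow> coord u (x + t *\<^sub>R axis) = coord u x - t / n"
proof -
  assume u: "u \<in> U"
  have "axis \<bullet> coord_vec u = - coord u centre" unfolding axis_def coord_def by (simp add: inner_simps)
  then show ?thesis using coord_centre[OF u] by (simp add: coord_add)
qed

lemma apex1_translate: "apex1 (x + t *\<^sub>R axis) = apex1 x + t"
proof -
  have "(\<Sum>u\<in>U. coord u (x + t *\<^sub>R axis)) = (\<Sum>u\<in>U. coord u x) - (\<Sum>u\<in>U. t / n)"
    by (simp add: coord_translate sum_subtractf)
  also have "(\<Sum>u\<in>U. t / n) = t" using n_pos by simp
  finally show ?thesis unfolding apex1_def by simp
qed

lemma base_translate: "u \<in> U \<Longrightarrow> base u (x + t *\<^sub>R axis) = base u x"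
  unfolding base_def using n_pos by (simp add: coord_translate apex1_translate field_simps)

lemma height_translate: "height (x + t *\<^sub>R axis) = height x - t"
  unfolding height_def by (simp add: apex1_translate)

lemma finite_rising: "finite rising"
  unfolding rising_def using finite_U by simp

lemma rising_nonempty: "rising \<noteq> {}"
proof
  assume empty: "rising = {}"
  have "(\<Sum>u\<in>U. slope u) = - (\<Sum>u\<in>U. coord u v2) / apex1 v2 - card U / n"
    unfolding slope_def by (simp add: sum_subtractf sum_negf sum_divide_distrib[symmetric])
  also have "\<dots> = - 1 / apex1 v2"
    using n_pos apex1_v2_nonzero by (simp add: sum_coord field_simps)
  finally have "0 < (\<Sum>u\<in>U. slope u)" using apex1_v2_neg by simp
  moreover have "\<forall>u\<in>U. slope u \<le> 0" using empty unfolding rising_def by auto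
  then have "(\<Sum>u\<in>U. slope u) \<le> 0" by (simp add: sum_nonpos)
  ultimately show False by simp
qed

lemma depth_le: "u \<in> U \<Longrightarrow> depth x \<le> n * base u x"
  unfolding depth_def using n_pos finite_U by simp

lemma depth_attained: obtains u where "u \<in> U" "depth x = n * base u x"
proof -
  have "Min ((\<lambda>u. base u x) ` U) \<in> (\<lambda>u. base u x) ` U"
    using finite_U U_nonempty by (intro Min_in) auto
  then show ?thesis using that unfolding depth_def by auto
qed

lemma roof_le: "u \<in> rising \<Longrightarrow> roof x \<le> base u x / slope u"
  unfolding roof_def using finite_rising by simp

lemma roof_attained: obtains u where "u \<in> rising" "roof x = base u x / slope u"
proof -
  have "Min ((\<lambda>u. base u x / slope u) ` rising) \<in> (\<lambda>u. base u x / slope u) ` rising"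
    using finite_rising rising_nonempty by (intro Min_in) auto
  then show ?thesis using that unfolding roof_def by auto
qed

lemma base_pos_if_depth_pos: "0 < depth x \<Longrightarrow> u \<in> U \<Longrightarrow> 0 < base u x"
  using depth_le[of u x] n_pos by (smt (verit) zero_less_mult_iff)

lemma roof_pos_if_depth_pos: "0 < depth x \<Longrightarrow> 0 < roof x"
  using base_pos_if_depth_pos roof_attained unfolding rising_def by (metis divide_pos_pos mem_Collect_eq)

lemma depth_roof_cong:
  "\<forall>u\<in>U. base u x = base u x' \<Longrightarrow> depth x = depth x' \<and> roof x = roof x'"
  unfolding depth_def roof_def rising_def by (auto intro!: arg_cong[where f=Min] image_cong)

lemma base_psi: "u \<in> U \<Longrightarrow> base u (psi x) = base u x"
  unfolding psi_def by (rule base_translate)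

lemma height_psi: "height (psi x) = height x - shift x"
  unfolding psi_def by (rule height_translate)

lemma roof_psi: "roof (psi x) = roof x"
  using depth_roof_cong[of "psi x" x] base_psi by auto

text \<open>Facets with \<open>slope u \<le> 0\<close> impose no condition at nonnegative height.\<close>
lemma above_slopes_iff_le_roof:
  assumes "\<forall>u\<in>U. 0 \<le> base u x" "0 \<le> height x"
  shows "(\<forall>u\<in>U. 0 \<le> base u x - height x * slope u) \<longleftrightarrow> height x \<le> roof x"
proof
  assume above: "\<forall>u\<in>U. 0 \<le> base u x - height x * slope u"
  obtain u where u: "u \<in> rising" "roof x = base u x / slope u" by (rule roof_attained)
  then have "0 < slope u" "u \<in> U" unfolding rising_def by auto
  then show "height x \<le> roof x" using above u by (simp add: pos_le_divide_eq)
next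
  assume le: "height x \<le> roof x"
  show "\<forall>u\<in>U. 0 \<le> base u x - height x * slope u"
  proof
    fix u assume u: "u \<in> U"
    show "0 \<le> base u x - height x * slope u"
    proof (cases "0 < slope u")
      case True
      then have "height x \<le> base u x / slope u"
        using u le roof_le[of u x] unfolding rising_def by fastforce
      then show ?thesis using True by (simp add: pos_le_divide_eq)
    next
      case False
      then show ?thesis using assms u by (smt (verit) mult_nonneg_nonpos)
    qed
  qed
qed

lemma shift_eq_0: "depth x \<le> 0 \<Longrightarrow> shift x = 0"
  unfolding shift_def fiber_shift_def by simp

lemma shift_eq: "0 < depth x \<Longrightarrow> shift x = fiber_shift (depth x) (roof x) (height x)"
  unfolding shift_def by simp

lemma psi_eq_self: "depth x \<le> 0 \<Longrightarrow> psi x = x"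
  unfolding psi_def by (simp add: shift_eq_0)

lemma sigma2_fiber:
  assumes "x \<in> \<sigma>2" "0 < depth x"
  shows "\<forall>u\<in>U. 0 < base u x" "0 < roof x" "0 \<le> height x" "height x \<le> roof x"
proof -
  show base: "\<forall>u\<in>U. 0 < base u x" using base_pos_if_depth_pos assms(2) by blast
  show "0 < roof x" using roof_pos_if_depth_pos assms(2) .
  show "0 \<le> height x" "height x \<le> roof x"
    using assms(1) above_slopes_iff_le_roof base by (auto simp: mem_sigma2_iff less_imp_le)
qed

lemma shift_bounds:
  assumes "x \<in> \<sigma>2" "0 < depth x"
  shows "0 \<le> shift x" "shift x \<le> depth x"
  using fiber_shift_bounds[of "depth x" "roof x" "height x"] sigma2_fiber[OF assms]
    shift_eq[OF assms(2)] assms(2) by simp_all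

lemma psi_mem_sigma2:
  assumes x: "x \<in> \<sigma>2" and pos: "0 < depth x" and nonneg: "0 \<le> height (psi x)"
  shows "psi x \<in> \<sigma>2"
proof -
  have "height (psi x) \<le> roof (psi x)"
    using sigma2_fiber[OF x pos] shift_bounds[OF x pos] by (simp add: height_psi roof_psi)
  moreover have base: "\<forall>u\<in>U. 0 \<le> base u (psi x)"
    using sigma2_fiber(1)[OF x pos] by (simp add: base_psi less_imp_le)
  ultimately show ?thesis
    using above_slopes_iff_le_roof[OF base nonneg] nonneg by (simp add: mem_sigma2_iff)
qed

lemma psi_mem_sigma1:
  assumes x: "x \<in> \<sigma>2" and pos: "0 < depth x" and nonpos: "height (psi x) \<le> 0"
  shows "psi x \<in> \<sigma>1"
proof -
  have "0 \<le> base u (psi x) + height (psi x) / n" if u: "u \<in> U" for u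
  proof -
    have "0 \<le> n * base u (psi x) + height (psi x)"
      using depth_le[OF u, of x] sigma2_fiber[OF x pos] shift_bounds[OF x pos] u
      by (simp add: base_psi height_psi)
    then show ?thesis using n_pos by (simp add: field_simps)
  qed
  then show ?thesis using nonpos by (simp add: mem_sigma1_iff)
qed

lemma psi_mem_union:
  assumes x: "x \<in> \<sigma>2"
  shows "psi x \<in> \<sigma>1 \<union> \<sigma>2"
proof (cases "0 < depth x")
  case True
  then show ?thesis
    using psi_mem_sigma1[OF x True] psi_mem_sigma2[OF x True] by (cases "height (psi x) \<le> 0") auto
next
  case False
  then show ?thesis using x psi_eq_self by simp
qed

lemma inj_psi: "inj psi"
proof (rule injI)
  fix x x' assume eq: "psi x = psi x'"
  have base_eq: "\<forall>u\<in>U. base u x = base u x'"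
  proof
    fix u assume "u \<in> U"
    then show "base u x = base u x'" using base_psi[of u x] base_psi[of u x'] eq by simp
  qed
  then have depth_eq: "depth x' = depth x" and roof_eq: "roof x' = roof x"
    using depth_roof_cong[OF base_eq] by auto
  have heights: "height x - shift x = height x' - shift x'"
    using arg_cong[OF eq, of height] by (simp add: height_psi)
  have "height x = height x'"
  proof (cases "0 < depth x")
    case True
    then have "height x - fiber_shift (depth x) (roof x) (height x)
        = height x' - fiber_shift (depth x) (roof x) (height x')"
      using heights by (simp add: shift_eq depth_eq roof_eq)
    then show ?thesis
      by (rule fiber_shift_inj[OF less_imp_le[OF True] roof_pos_if_depth_pos[OF True]])
  next
    case False
    then have "shift x = 0" "shift x' = 0" using depth_eq by (simp_all add: shift_eq_0)
    then show ?thesis using heights by simp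
  qed
  then show "x = x'" using eq_if_base_height_eq base_eq by blast
qed

lemma mem_sigma2I:
  assumes "\<forall>u\<in>U. 0 \<le> base u x" "0 \<le> height x" "height x \<le> roof x"
  shows "x \<in> \<sigma>2"
  using above_slopes_iff_le_roof[OF assms(1,2)] assms by (simp add: mem_sigma2_iff)

lemma sigma1_height_ge: "x \<in> \<sigma>1 \<Longrightarrow> - depth x \<le> height x"
proof -
  assume x: "x \<in> \<sigma>1"
  obtain u where u: "u \<in> U" "depth x = n * base u x" by (rule depth_attained)
  have "0 \<le> base u x + height x / n" using x u by (simp add: mem_sigma1_iff)
  then show ?thesis using u n_pos by (simp add: field_simps)
qed

lemma psi_surj:
  assumes z: "z \<in> \<sigma>1 \<union> \<sigma>2"
  shows "\<exists>x\<in>\<sigma>2. psi x = z"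
proof (cases "0 < depth z")
  case False
  have "z \<in> \<sigma>2"
  proof (cases "z \<in> \<sigma>2")
    case False
    then have z1: "z \<in> \<sigma>1" using z by blast
    then have "height z = 0"
      using sigma1_height_ge[OF z1] \<open>\<not> 0 < depth z\<close> by (simp add: mem_sigma1_iff)
    then show ?thesis using z1 by (simp add: mem_sigma1_iff mem_sigma2_iff)
  qed
  then show ?thesis using False psi_eq_self by force
next
  case True
  have bases: "\<forall>u\<in>U. 0 \<le> base u z"
    using base_pos_if_depth_pos[OF True] by (simp add: less_imp_le)
  have roof: "0 < roof z" using roof_pos_if_depth_pos[OF True] .
  have "- depth z \<le> height z \<and> height z \<le> roof z"
    using z sigma2_fiber[OF _ True] sigma1_height_ge roof True by (auto simp: mem_sigma1_iff)
  then obtain s where s: "0 \<le> s" "s \<le> roof z" "s - fiber_shift (depth z) (roof z) s = height z"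
    using fiber_shift_surj[of "depth z" "roof z" "height z"] True roof by auto
  define x where "x = z + (height z - s) *\<^sub>R axis"
  have base_x: "\<forall>u\<in>U. base u x = base u z" unfolding x_def by (simp add: base_translate)
  have height_x: "height x = s" unfolding x_def by (simp add: height_translate)
  have depth_x: "depth x = depth z" and roof_x: "roof x = roof z"
    using depth_roof_cong[OF base_x] by auto
  have "x \<in> \<sigma>2" using mem_sigma2I bases base_x height_x roof_x s by simp
  moreover have shift_x: "shift x = s - height z"
    using s(3) True by (simp add: shift_eq depth_x roof_x height_x)
  have "psi x = z + ((height z - s) + (s - height z)) *\<^sub>R axis"
    unfolding psi_def shift_x unfolding x_def scaleR_add_left by (simp add: add.assoc)
  then have "psi x = z" by simp
  ultimately show ?thesis by blast
qed

lemma mem_tau_iff_height: "x \<in> \<sigma>2 \<Longrightarrow> x \<in> \<tau> \<longleftrightarrow> height x = 0"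
  by (auto simp: mem_sigma2_iff mem_tau_iff)

lemma psi_notin_D_if_mem_tau:
  assumes x: "x \<in> \<tau>"
  shows "psi x \<notin> rel_interior \<sigma>1 \<union> (\<sigma>2 - rel_frontier \<tau>)"
proof -
  have height: "height x = 0" using x by (simp add: mem_tau_iff)
  then have not_int1: "x \<notin> rel_interior \<sigma>1" by (simp add: mem_rel_interior_sigma1_iff)
  obtain u0 where u0: "u0 \<in> U" "depth x = n * base u0 x" by (rule depth_attained)
  show ?thesis
  proof (cases "0 < depth x")
    case False
    then have "base u0 x \<le> 0" using u0 n_pos mult_pos_pos[of n "base u0 x"] by linarith
    then have "\<not> (\<forall>u\<in>U. 0 < base u x)" using u0(1) not_le by blast
    then have "x \<notin> rel_interior \<tau>" by (simp add: mem_rel_interior_tau_iff)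
    then show ?thesis
      using x not_int1 False psi_eq_self rel_frontier_convex_hull_finite[OF finite_U] by auto
  next
    case True
    have bottom: "height (psi x) = - depth x"
      using fiber_shift_bottom(1)[of "depth x" "roof x" "height x"] True height
        roof_pos_if_depth_pos[OF True] by (simp add: height_psi shift_eq)
    then have "psi x \<notin> \<sigma>2" using True by (simp add: mem_sigma2_iff)
    moreover have "psi x \<notin> rel_interior \<sigma>1"
      using u0 bottom n_pos by (auto simp: mem_rel_interior_sigma1_iff base_psi)
    ultimately show ?thesis using rel_interior_subset by blast
  qed
qed

lemma psi_mem_D_if_notin_tau:
  assumes x: "x \<in> \<sigma>2" and not_tau: "x \<notin> \<tau>"
  shows "psi x \<in> rel_interior \<sigma>1 \<union> (\<sigma>2 - rel_frontier \<tau>)"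
proof (cases "0 < depth x")
  case False
  then show ?thesis
    using x not_tau psi_eq_self rel_frontier_convex_hull_finite[OF finite_U] by auto
next
  case True
  note fiber = sigma2_fiber[OF x True]
  have "height x \<noteq> 0" using x not_tau mem_tau_iff_height by blast
  then have above_bottom: "- depth x < height (psi x)"
    using fiber_shift_bottom[of "depth x" "roof x" "height x"] True fiber
    by (simp add: height_psi shift_eq order_le_less)
  show ?thesis
  proof (cases "height (psi x) < 0")
    case True
    have "0 < base u (psi x) + height (psi x) / n" if u: "u \<in> U" for u
    proof -
      have "0 < n * base u (psi x) + height (psi x)"
        using depth_le[OF u, of x] above_bottom u by (simp add: base_psi)
      then show ?thesis using n_pos by (simp add: field_simps)
    qed
    then show ?thesis using True by (simp add: mem_rel_interior_sigma1_iff)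
  next
    case False
    then have "psi x \<in> \<sigma>2" using psi_mem_sigma2[OF x \<open>0 < depth x\<close>] by simp
    moreover have "psi x \<notin> \<tau> \<or> psi x \<in> rel_interior \<tau>"
      using fiber(1) by (auto simp: mem_tau_iff mem_rel_interior_tau_iff base_psi)
    ultimately show ?thesis using rel_frontier_convex_hull_finite[OF finite_U] by blast
  qed
qed

lemma psi_fixes_outer_boundary:
  assumes "x \<in> rel_frontier \<sigma>2 - rel_interior \<tau>"
  shows "psi x = x"
proof (cases "0 < depth x")
  case True
  have x: "x \<in> \<sigma>2" "x \<notin> rel_interior \<sigma>2" "x \<notin> rel_interior \<tau>"
    using assms rel_frontier_convex_hull_finite[of "insert v2 U"] finite_U by auto
  note fiber = sigma2_fiber[OF x(1) True]
  have pos: "0 < height x" using x(3) fiber by (auto simp: mem_rel_interior_tau_iff)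
  obtain u where u: "u \<in> U" "\<not> 0 < base u x - height x * slope u"
    using x(2) pos by (auto simp: mem_rel_interior_sigma2_iff)
  then have on_facet: "base u x = height x * slope u"
    using x(1) by (force simp: mem_sigma2_iff)
  moreover have "0 < base u x" using fiber(1) u(1) by blast
  ultimately have "0 < height x * slope u" by simp
  then have "0 < slope u" using pos by (simp add: zero_less_mult_iff)
  then have "roof x \<le> height x"
    using roof_le[of u x] on_facet u by (simp add: rising_def)
  then have "roof x = height x" using fiber by simp
  then show ?thesis using True by (simp add: psi_def shift_eq fiber_shift_def)
next
  case False
  then show ?thesis by (simp add: psi_eq_self)
qed

lemma continuous_on_base: "continuous_on S (base u)"
  unfolding base_def[abs_def] apex1_def coord_def using n_pos by (intro continuous_intros) auto

lemma continuous_on_height: "continuous_on S height"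
  unfolding height_def[abs_def] apex1_def coord_def by (intro continuous_intros)

lemma continuous_on_depth: "continuous_on S depth"
  unfolding depth_def[abs_def] using finite_U U_nonempty continuous_on_base
  by (intro continuous_intros continuous_on_Min) auto

lemma continuous_on_roof: "continuous_on S roof"
proof -
  have "\<forall>u\<in>rising. continuous_on S (\<lambda>x. base u x / slope u)"
    unfolding rising_def using continuous_on_base by (auto intro!: continuous_intros)
  then show ?thesis
    unfolding roof_def[abs_def] using finite_rising rising_nonempty by (intro continuous_on_Min)
qed

lemma abs_shift_le: "x \<in> \<sigma>2 \<Longrightarrow> \<bar>shift x\<bar> \<le> max 0 (depth x)"
  using shift_bounds[of x] shift_eq_0[of x] by (cases "0 < depth x") auto

text \<open>Where \<open>roof\<close> vanishes the formula for \<open>shift\<close> divides by zero; continuity there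
  comes from the bound \<open>\<bar>shift\<bar> \<le> max 0 depth\<close> instead.\<close>
lemma continuous_on_shift: "continuous_on \<sigma>2 shift"
  unfolding continuous_on_def
proof
  fix x0 assume x0: "x0 \<in> \<sigma>2"
  have lim: "(f \<longlongrightarrow> f x0) (at x0 within \<sigma>2)" if "continuous_on UNIV f" for f :: "'a \<Rightarrow> real"
    using that unfolding continuous_on_def by (blast intro: tendsto_within_subset)
  note limits = lim[OF continuous_on_depth] lim[OF continuous_on_roof] lim[OF continuous_on_height]
  show "(shift \<longlongrightarrow> shift x0) (at x0 within \<sigma>2)"
  proof (cases "roof x0 = 0")
    case False
    then show ?thesis
      unfolding shift_def[abs_def] fiber_shift_def by (intro tendsto_intros limits False)
  next
    case True
    then have "depth x0 \<le> 0" using roof_pos_if_depth_pos[of x0] by linarith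
    have "\<forall>\<^sub>F x in at x0 within \<sigma>2. norm (shift x) \<le> max 0 (depth x)"
      unfolding eventually_at_filter by (intro always_eventually) (simp add: abs_shift_le)
    moreover have "((\<lambda>x. max 0 (depth x)) \<longlongrightarrow> 0) (at x0 within \<sigma>2)"
      using tendsto_max[OF tendsto_const limits(1), of 0] \<open>depth x0 \<le> 0\<close> by (simp add: max_absorb1)
    ultimately have "(shift \<longlongrightarrow> 0) (at x0 within \<sigma>2)"
      by (rule Lim_null_comparison)
    then show ?thesis using shift_eq_0[OF \<open>depth x0 \<le> 0\<close>] by simp
  qed
qed

lemma continuous_on_psi: "continuous_on \<sigma>2 psi"
  unfolding psi_def[abs_def] using continuous_on_shift by (intro continuous_intros)

lemma poly_fun_coord: "linear g \<Longrightarrow> poly_fun (\<lambda>q. coord u (g q))"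
proof -
  assume "linear g"
  then have "poly_fun (\<lambda>q. g q \<bullet> coord_vec u - v1 \<bullet> coord_vec u)"
    by (intro poly_fun_diff poly_fun_inner_linear poly_fun.const)
  then show ?thesis unfolding coord_def by (simp add: inner_diff_left)
qed

lemma poly_fun_apex1: "linear g \<Longrightarrow> poly_fun (\<lambda>q. apex1 (g q))"
  unfolding apex1_def using finite_U by (intro poly_fun_diff poly_fun.const poly_fun_sum ballI poly_fun_coord)

lemma poly_fun_base: "linear g \<Longrightarrow> poly_fun (\<lambda>q. base u (g q))"
  unfolding base_def by (intro poly_fun.add poly_fun_divide_const poly_fun_coord poly_fun_apex1)

lemma poly_fun_height: "linear g \<Longrightarrow> poly_fun (\<lambda>q. height (g q))"
proof -
  assume "linear g"
  then have "poly_fun (\<lambda>q. 0 - apex1 (g q))" by (intro poly_fun_diff poly_fun.const poly_fun_apex1)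
  then show ?thesis unfolding height_def by simp
qed

lemma semialgebraic_sigma2: "semialgebraic \<sigma>2"
proof -
  have "\<sigma>2 = {x. (\<forall>u\<in>U. 0 \<le> base u x - height x * slope u) \<and> 0 \<le> height x}"
    using mem_sigma2_iff by blast
  moreover have "semialgebraic {x. (\<forall>u\<in>U. 0 \<le> base u x - height x * slope u) \<and> 0 \<le> height x}"
    using finite_U
    by (intro semialgebraic_conj semialgebraic_ball ballI semialgebraic_le poly_fun.const
        poly_fun_diff poly_fun.mult poly_fun_base[OF linear_ident] poly_fun_height[OF linear_ident])
  ultimately show ?thesis by simp
qed

lemma depth_eqI: "i \<in> U \<Longrightarrow> \<forall>u\<in>U. base i x \<le> base u x \<Longrightarrow> depth x = n * base i x"
  unfolding depth_def using finite_U by (subst Min_eqI) auto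

lemma roof_eqI:
  "j \<in> rising \<Longrightarrow> \<forall>u\<in>rising. base j x / slope j \<le> base u x / slope u \<Longrightarrow> roof x = base j x / slope j"
  unfolding roof_def using finite_rising by (subst Min_eqI) auto

lemma shift_mult_roof: "0 < depth x \<Longrightarrow> shift x * roof x = depth x * (roof x - height x)"
  using roof_pos_if_depth_pos[of x] by (simp add: shift_eq fiber_shift_def)

lemma psi_inner: "psi x \<bullet> b = x \<bullet> b + shift x * (axis \<bullet> b)"
  unfolding psi_def by (simp add: inner_add_left)

lemma eq_psi_iff_inner:
  "z = psi x \<longleftrightarrow> (depth x \<le> 0 \<and> (\<forall>b\<in>Basis. z \<bullet> b = x \<bullet> b))
     \<or> (0 < depth x \<and> (\<forall>b\<in>Basis. (z \<bullet> b - x \<bullet> b) * roof x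
            = depth x * (roof x - height x) * (axis \<bullet> b)))"
proof (cases "0 < depth x")
  case True
  have "z \<bullet> b = psi x \<bullet> b \<longleftrightarrow>
      (z \<bullet> b - x \<bullet> b) * roof x = depth x * (roof x - height x) * (axis \<bullet> b)" for b
  proof -
    have "z \<bullet> b = psi x \<bullet> b \<longleftrightarrow> (z \<bullet> b - x \<bullet> b) * roof x = (shift x * (axis \<bullet> b)) * roof x"
      using roof_pos_if_depth_pos[OF True] by (auto simp: psi_inner)
    also have "(shift x * (axis \<bullet> b)) * roof x = depth x * (roof x - height x) * (axis \<bullet> b)"
      using shift_mult_roof[OF True] by (metis mult.commute mult.assoc)
    finally show ?thesis .
  qed
  then show ?thesis using True by (simp add: euclidean_eq_iff[of z])
next
  case False
  then show ?thesis by (simp add: psi_eq_self euclidean_eq_iff[of z])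
qed

text \<open>The graph of \<open>psi\<close> is described by first-order conditions on coordinates: the minima
  defining \<open>depth\<close> and \<open>roof\<close> are replaced by minimising indices \<open>i\<close> and \<open>j\<close>.\<close>
lemma psi_eq_iff:
  "z = psi x \<longleftrightarrow> (\<exists>i\<in>U. \<exists>j\<in>rising. (\<forall>u\<in>U. base i x \<le> base u x)
     \<and> (\<forall>u\<in>rising. base j x / slope j \<le> base u x / slope u)
     \<and> ((n * base i x \<le> 0 \<and> (\<forall>b\<in>Basis. z \<bullet> b = x \<bullet> b))
       \<or> (0 < n * base i x \<and> (\<forall>b\<in>Basis. (z \<bullet> b - x \<bullet> b) * (base j x / slope j)
            = n * base i x * (base j x / slope j - height x) * (axis \<bullet> b)))))"
  (is "_ \<longleftrightarrow> (\<exists>i\<in>U. \<exists>j\<in>rising. ?min_depth i \<and> ?min_roof j \<and> ?graph i j)")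
proof
  assume z: "z = psi x"
  obtain i where i: "i \<in> U" "depth x = n * base i x" by (rule depth_attained)
  obtain j where j: "j \<in> rising" "roof x = base j x / slope j" by (rule roof_attained)
  have "?min_depth i" using depth_le[of _ x] i n_pos by (metis mult_le_cancel_left_pos)
  moreover have "?min_roof j" using roof_le[of _ x] j by metis
  moreover have "?graph i j" using z i(2) j(2) by (simp add: eq_psi_iff_inner)
  ultimately show "\<exists>i\<in>U. \<exists>j\<in>rising. ?min_depth i \<and> ?min_roof j \<and> ?graph i j"
    using i j by blast
next
  assume "\<exists>i\<in>U. \<exists>j\<in>rising. ?min_depth i \<and> ?min_roof j \<and> ?graph i j"
  then obtain i j where ij: "i \<in> U" "j \<in> rising" "?min_depth i" "?min_roof j" "?graph i j"
    by blast
  then show "z = psi x" by (simp add: eq_psi_iff_inner depth_eqI roof_eqI)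
qed

lemma semialgebraic_graph_psi: "semialgebraic ((\<lambda>x. (x, psi x)) ` \<sigma>2)"
proof -
  have "(\<lambda>x. (x, psi x)) ` \<sigma>2 = {q. fst q \<in> \<sigma>2 \<and> snd q = psi (fst q)}" by force
  moreover have "semialgebraic {q. fst q \<in> \<sigma>2 \<and> snd q = psi (fst q)}"
    unfolding mem_sigma2_iff psi_eq_iff using finite_U finite_rising
    by (intro semialgebraic_conj semialgebraic_disj semialgebraic_ball semialgebraic_bex ballI
        finite_Basis semialgebraic_le semialgebraic_less semialgebraic_eq poly_fun.const poly_fun_diff
        poly_fun.mult poly_fun_divide_const poly_fun_base[OF linear_fst] poly_fun_height[OF linear_fst]
        poly_fun_inner_linear[OF linear_fst] poly_fun_inner_linear[OF linear_snd])
  ultimately show ?thesis by simp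
qed

theorem gluing_homeomorphism:
  "\<exists>g. homeomorphism \<sigma>2 (\<sigma>1 \<union> \<sigma>2) psi g
     \<and> semialgebraic_map \<sigma>2 psi
     \<and> psi ` (\<sigma>2 - \<tau>) = rel_interior \<sigma>1 \<union> (\<sigma>2 - rel_frontier \<tau>)
     \<and> (\<forall>x \<in> rel_frontier \<sigma>2 - rel_interior \<tau>. psi x = x)"
proof -
  have onto: "psi ` \<sigma>2 = \<sigma>1 \<union> \<sigma>2" using psi_mem_union psi_surj by blast
  obtain g where "homeomorphism \<sigma>2 (\<sigma>1 \<union> \<sigma>2) psi g"
    using homeomorphism_compact[OF finite_imp_compact_convex_hull continuous_on_psi onto]
      inj_on_subset[OF inj_psi] finite_U by blast
  moreover have "semialgebraic_map \<sigma>2 psi"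
    unfolding semialgebraic_map_def using semialgebraic_sigma2 semialgebraic_graph_psi by blast
  moreover have "psi ` (\<sigma>2 - \<tau>) = rel_interior \<sigma>1 \<union> (\<sigma>2 - rel_frontier \<tau>)"
  proof
    show "psi ` (\<sigma>2 - \<tau>) \<subseteq> rel_interior \<sigma>1 \<union> (\<sigma>2 - rel_frontier \<tau>)"
      using psi_mem_D_if_notin_tau by blast
    show "rel_interior \<sigma>1 \<union> (\<sigma>2 - rel_frontier \<tau>) \<subseteq> psi ` (\<sigma>2 - \<tau>)"
    proof
      fix z assume z: "z \<in> rel_interior \<sigma>1 \<union> (\<sigma>2 - rel_frontier \<tau>)"
      then have "z \<in> psi ` \<sigma>2" using onto rel_interior_subset by blast
      then obtain x where x: "x \<in> \<sigma>2" "psi x = z" by blast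
      then have "x \<notin> \<tau>" using z psi_notin_D_if_mem_tau by blast
      then show "z \<in> psi ` (\<sigma>2 - \<tau>)" using x by blast
    qed
  qed
  ultimately show ?thesis using psi_fixes_outer_boundary by blast
qed

end

lemma facet_of_simplex_decomposition:
  fixes \<sigma> \<tau> :: "'a::euclidean_space set"
  assumes "k simplex \<sigma>" "\<tau> facet_of \<sigma>"
  obtains v where "v \<notin> {x. x extreme_point_of \<tau>}"
    "\<not> affine_dependent (insert v {x. x extreme_point_of \<tau>})"
    "int (card {x. x extreme_point_of \<tau>}) = k"
    "finite {x. x extreme_point_of \<tau>}"
    "\<sigma> = convex hull (insert v {x. x extreme_point_of \<tau>})"
    "\<tau> = convex hull {x. x extreme_point_of \<tau>}"
proof -
  obtain C where C: "\<not> affine_dependent C" "int (card C) = k + 1" "\<sigma> = convex hull C"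
    using assms(1) unfolding simplex_def by blast
  obtain v where v: "v \<in> C" "\<tau> = convex hull (C - {v})"
    using assms(2) C facet_of_convex_hull_affine_independent by blast
  have indep: "\<not> affine_dependent (C - {v})"
    using C(1) affine_independent_subset by blast
  have vertices: "C - {v} = {x. x extreme_point_of \<tau>}"
    using extreme_point_of_convex_hull_affine_independent[OF indep] v(2) by blast
  have "finite C" using C(1) aff_independent_finite by blast
  then have "int (card (C - {v})) = k"
  proof -
    have "0 < card C" using \<open>finite C\<close> v(1) card_gt_0_iff by blast
    then show ?thesis using C(2) v(1) \<open>finite C\<close> by (simp add: card_Diff_singleton of_nat_diff)
  qed
  moreover have "insert v (C - {v}) = C" using v(1) by blast
  ultimately show ?thesis
    using that[of v] C v \<open>finite C\<close> unfolding vertices[symmetric] by simp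
qed

theorem mainTheorem12:
  fixes \<sigma>1 \<sigma>2 \<tau> :: "'a::euclidean_space set"
  assumes "int DIM('a) simplex \<sigma>1"
    and "int DIM('a) simplex \<sigma>2"
    and "\<tau> facet_of \<sigma>1" and "\<tau> facet_of \<sigma>2"
    and "\<sigma>1 \<inter> \<sigma>2 = \<tau>"
  shows "\<exists>\<psi> \<phi>. homeomorphism \<sigma>2 (\<sigma>1 \<union> \<sigma>2) \<psi> \<phi>
           \<and> semialgebraic_map \<sigma>2 \<psi>
           \<and> \<psi> ` (\<sigma>2 - \<tau>) = rel_interior \<sigma>1 \<union> (\<sigma>2 - rel_frontier \<tau>)
           \<and> (\<forall>x \<in> rel_frontier \<sigma>2 - rel_interior \<tau>. \<psi> x = x)"
proof -
  define U where "U = {x. x extreme_point_of \<tau>}"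
  obtain v1 where v1: "v1 \<notin> U" "\<not> affine_dependent (insert v1 U)" "int (card U) = int DIM('a)"
      "finite U" "\<sigma>1 = convex hull (insert v1 U)" "\<tau> = convex hull U"
    using facet_of_simplex_decomposition[OF assms(1,3)] unfolding U_def by blast
  obtain v2 where v2: "v2 \<notin> U" "\<not> affine_dependent (insert v2 U)"
      "\<sigma>2 = convex hull (insert v2 U)"
    using facet_of_simplex_decomposition[OF assms(2,4)] unfolding U_def by blast
  have "adjacent_simplices U v1 v2"
    using v1 v2 assms(5) by unfold_locales auto
  from adjacent_simplices.gluing_homeomorphism[OF this] show ?thesis
    unfolding v1(5,6) v2(3) by blast
qed

end
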